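(* For every Noetherian commutative ring $R$, $\operatorname{nil}_\infty(R)=0$.
   Context: For a commutative ring $R$, the infinite nilradical is $\operatorname{nil}_\infty(R)=\bigcap_{\mathfrak p\in\operatorname{Spec}(R)}\bigcap_{n\in\mathbb{N}}\mathfrak p^n$. *)

theory Defs
  imports "HOL-Algebra.Ideal_Product" "HOL-Algebra.Ring_Divisibility"
begin

primrec ideal_pow :: "('a, 'b) ring_scheme \<Rightarrow> 'a set \<Rightarrow> nat \<Rightarrow> 'a set" where
  "ideal_pow R I 0 = carrier R"
| "ideal_pow R I (Suc n) = ideal_prod R I (ideal_pow R I n)"

text \<open>Infinite nilradical: intersection of all powers of all prime ideals (as a subset of R;
  intersecting with the carrier gives the conventional value R for the empty family).\<close>
definition nil_infty :: "('a, 'b) ring_scheme \<Rightarrow> 'a set" where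
  "nil_infty R = carrier R \<inter> (\<Inter>P\<in>{P. primeideal P R}. \<Inter>n. ideal_pow R P n)"

end

theory Submission
  imports Defs
begin

text \<open>
  Given \<open>x \<noteq> 0\<close>, the ascending chain condition yields an ideal \<open>I\<close> maximal among the
  ideals avoiding \<open>x\<close>. Its colon ideal \<open>P = (I : x)\<close> is prime, and every \<open>p \<in> P\<close> has a
  power in \<open>I\<close>: the colon ideals \<open>(I : p^n)\<close> stabilise at some \<open>N\<close>, whereas \<open>p^N \<notin> I\<close> would
  by maximality give \<open>x = i + s p^N\<close> with \<open>i \<in> I\<close> and \<open>s \<in> (I : p^(N+1)) = (I : p^N)\<close>, forcing
  \<open>x \<in> I\<close>. Since \<open>P\<close> is generated by finitely many such elements, \<open>P^m \<subseteq> I\<close> for some \<open>m\<close>,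
  and so \<open>x \<notin> P^m\<close>.
\<close>

context ring
begin

lemma ideal_pow_ideal: "ideal J R \<Longrightarrow> ideal (ideal_pow R J n) R"
  by (induction n) (simp_all add: oneideal ideal_prod_is_ideal)

lemma ideal_pow_Suc_subset: "ideal J R \<Longrightarrow> ideal_pow R J (Suc n) \<subseteq> J"
  using ideal_prod_inter[OF _ ideal_pow_ideal] by simp

lemma ideal_prod_mono:
  assumes "X \<subseteq> X'" "Y \<subseteq> Y'"
  shows "ideal_prod R X Y \<subseteq> ideal_prod R X' Y'"
proof
  fix s assume "s \<in> ideal_prod R X Y"
  then show "s \<in> ideal_prod R X' Y'"
    by induction (use assms in \<open>auto intro: ideal_prod.intros\<close>)
qed

lemma ideal_pow_mono: "X \<subseteq> Y \<Longrightarrow> ideal_pow R X n \<subseteq> ideal_pow R Y n"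
  by (induction n) (simp_all add: ideal_prod_mono)

definition ideal_colon :: "'a set \<Rightarrow> 'a set \<Rightarrow> 'a set" where
  "ideal_colon I J = {r \<in> carrier R. \<forall>j\<in>J. j \<otimes> r \<in> I}"

lemma ideal_colon_singleton_iff:
  "r \<in> ideal_colon I {a} \<longleftrightarrow> r \<in> carrier R \<and> a \<otimes> r \<in> I"
  by (simp add: ideal_colon_def)

lemma subset_ideal_colon: "ideal I R \<Longrightarrow> ideal J R \<Longrightarrow> I \<subseteq> ideal_colon I J"
  by (auto simp: ideal_colon_def ideal.I_l_closed ideal.Icarr)

lemma ideal_prod_subset_iff_subset_ideal_colon:
  assumes "ideal I R" "ideal X R"
  shows "ideal_prod R J X \<subseteq> I \<longleftrightarrow> X \<subseteq> ideal_colon I J"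
proof
  assume "ideal_prod R J X \<subseteq> I"
  then show "X \<subseteq> ideal_colon I J"
    using ideal.Icarr[OF assms(2)] by (auto simp: ideal_colon_def intro: ideal_prod.prod)
next
  assume X: "X \<subseteq> ideal_colon I J"
  show "ideal_prod R J X \<subseteq> I"
  proof
    fix s assume "s \<in> ideal_prod R J X"
    then show "s \<in> I"
      by induction (use X assms(1) in \<open>auto simp: ideal_colon_def additive_subgroup.a_closed ideal.axioms(1)\<close>)
  qed
qed

lemma ideal_pow_Suc_subset_iff:
  assumes "ideal I R" "ideal J R"
  shows "ideal_pow R J (Suc n) \<subseteq> I \<longleftrightarrow> ideal_pow R J n \<subseteq> ideal_colon I J"
  using ideal_prod_subset_iff_subset_ideal_colon[OF assms(1) ideal_pow_ideal[OF assms(2)]] by simp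

definition maximal_avoiding :: "'a set \<Rightarrow> 'a \<Rightarrow> bool" where
  "maximal_avoiding I x \<longleftrightarrow>
     ideal I R \<and> x \<notin> I \<and> (\<forall>J. ideal J R \<longrightarrow> I \<subseteq> J \<longrightarrow> x \<notin> J \<longrightarrow> J = I)"

end

context noetherian_ring
begin

lemma mono_ideal_seq_stabilizes:
  fixes C :: "nat \<Rightarrow> 'a set"
  assumes "\<And>n. ideal (C n) R" and "mono C"
  shows "\<exists>N. \<forall>n. C n \<subseteq> C N"
proof -
  have "C m \<subseteq> C n \<or> C n \<subseteq> C m" for m n
    using nat_le_linear[of m n] monoD[OF assms(2)] by blast
  then have "subset.chain {I. ideal I R} (range C)"
    using assms(1) unfolding pred_on.chain_def by blast
  then have "\<Union>(range C) \<in> range C"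
    using ideal_chain_is_trivial by blast
  then show ?thesis by blast
qed

lemma exists_maximal_avoiding:
  assumes "x \<noteq> \<zero>"
  shows "\<exists>I. maximal_avoiding I x"
proof -
  define F where "F = {J. ideal J R \<and> x \<notin> J}"
  have "\<exists>M\<in>F. \<forall>J\<in>F. M \<subseteq> J \<longrightarrow> J = M"
  proof (rule subset_Zorn_nonempty)
    show "F \<noteq> {}"
      using zeroideal assms unfolding F_def by blast
  next
    fix C assume C: "C \<noteq> {}" "subset.chain F C"
    then have "subset.chain {I. ideal I R} C"
      unfolding F_def pred_on.chain_def by blast
    then have "\<Union>C \<in> C"
      using ideal_chain_is_trivial[OF C(1)] by blast
    then show "\<Union>C \<in> F"
      using C(2) unfolding pred_on.chain_def by blast
  qed
  then show ?thesis
    unfolding F_def maximal_avoiding_def by blast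
qed

end

context cring
begin

lemma ideal_pow_cgenideal_subset:
  assumes a: "a \<in> carrier R"
  shows "ideal_pow R (PIdl a) k \<subseteq> PIdl (a [^] k)"
proof (induction k)
  case 0
  show ?case
    unfolding cgenideal_def by (force intro: r_one[symmetric])
next
  case (Suc k)
  have ak: "a [^] k \<in> carrier R" using a by simp
  have "ideal_pow R (PIdl a) (Suc k) \<subseteq> ideal_prod R (PIdl a) (PIdl (a [^] k))"
    using ideal_prod_mono[OF subset_refl Suc.IH] by simp
  also have "\<dots> = Idl (PIdl (a \<otimes> a [^] k))"
    using ideal_prod_eq_genideal[OF cgenideal_ideal[OF a] cgenideal_ideal[OF ak]] cgenideal_prod[OF a ak]
    by simp
  also have "\<dots> \<subseteq> PIdl (a \<otimes> a [^] k)"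
    using a ak by (simp add: genideal_minimal cgenideal_ideal)
  also have "a \<otimes> a [^] k = a [^] Suc k"
    using a ak by (simp add: m_comm)
  finally show ?case .
qed

lemma ideal_colon_is_ideal:
  assumes "ideal I R" "J \<subseteq> carrier R"
  shows "ideal (ideal_colon I J) R"
proof -
  interpret I: ideal I R by fact
  show ?thesis
  proof (rule idealI[OF ring_axioms])
    show "subgroup (ideal_colon I J) (add_monoid R)"
      using assms(2)
      by (rule_tac subgroup.intro) (auto simp: ideal_colon_def r_distr r_minus subset_iff simp flip: a_inv_def)
  next
    fix a x assume a: "a \<in> ideal_colon I J" and x: "x \<in> carrier R"
    have "j \<otimes> (x \<otimes> a) = x \<otimes> (j \<otimes> a)" "j \<otimes> (a \<otimes> x) = (j \<otimes> a) \<otimes> x" if "j \<in> J" for j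
      using that a x assms(2) by (auto simp: ideal_colon_def m_lcomm m_assoc)
    then show "x \<otimes> a \<in> ideal_colon I J" "a \<otimes> x \<in> ideal_colon I J"
      using a x by (auto simp: ideal_colon_def I.I_l_closed I.I_r_closed)
  qed
qed

text \<open>The induction hypothesis is applied to the colon ideals \<open>(I : J)\<close> and \<open>(I : K)\<close>.\<close>

lemma ideal_pow_add_subset:
  assumes "ideal I R" "ideal J R" "ideal K R"
    and "ideal_pow R J a \<subseteq> I" "ideal_pow R K b \<subseteq> I"
  shows "ideal_pow R (J <+> K) (a + b) \<subseteq> I"
  using assms
proof (induction "a + b" arbitrary: a b I)
  case 0
  then show ?case by simp
next
  case (Suc n)
  note I = Suc.prems(1) and J = Suc.prems(2) and K = Suc.prems(3)
  have JK: "ideal (J <+> K) R" using add_ideals[OF J K] .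
  show ?case
  proof (cases "a = 0 \<or> b = 0")
    case True
    then have "carrier R \<subseteq> I" using Suc.prems(4,5) by (elim disjE) simp_all
    then show ?thesis using ideal.Icarr[OF ideal_pow_ideal[OF JK]] by blast
  next
    case False
    then obtain a' b' where a: "a = Suc a'" and b: "b = Suc b'" by (meson not0_implies_Suc)
    have carr: "J \<subseteq> carrier R" "K \<subseteq> carrier R"
      using J K by (simp_all add: additive_subgroup.a_subset ideal.axioms(1))
    define X where "X = ideal_pow R (J <+> K) n"
    have X: "ideal X R" unfolding X_def using ideal_pow_ideal[OF JK] .
    have "ideal_pow R J a' \<subseteq> ideal_colon I J" "ideal_pow R K b \<subseteq> ideal_colon I J"
      using Suc.prems(4,5) a ideal_pow_Suc_subset_iff[OF I J] subset_ideal_colon[OF I J] by auto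
    then have "X \<subseteq> ideal_colon I J"
      using Suc.hyps(1)[OF _ ideal_colon_is_ideal[OF I carr(1)] J K] Suc.hyps(2) a
      unfolding X_def by simp
    then have JX: "ideal_prod R J X \<subseteq> I"
      using ideal_prod_subset_iff_subset_ideal_colon[OF I X] by blast
    have "ideal_pow R J a \<subseteq> ideal_colon I K" "ideal_pow R K b' \<subseteq> ideal_colon I K"
      using Suc.prems(4,5) b ideal_pow_Suc_subset_iff[OF I K] subset_ideal_colon[OF I K] by auto
    then have "X \<subseteq> ideal_colon I K"
      using Suc.hyps(1)[OF _ ideal_colon_is_ideal[OF I carr(2)] J K] Suc.hyps(2) b
      unfolding X_def by simp
    then have KX: "ideal_prod R K X \<subseteq> I"
      using ideal_prod_subset_iff_subset_ideal_colon[OF I X] by blast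
    have "ideal_pow R (J <+> K) (a + b) = ideal_prod R J X <+> ideal_prod R K X"
      using ideal_prod_distr(2)[OF X J K] Suc.hyps(2)[symmetric] unfolding X_def by simp
    also have "\<dots> = Idl (ideal_prod R J X \<union> ideal_prod R K X)"
      using union_genideal[OF ideal_prod_is_ideal[OF J X] ideal_prod_is_ideal[OF K X]] by (rule sym)
    also have "\<dots> \<subseteq> I"
      using JX KX by (simp add: genideal_minimal[OF I])
    finally show ?thesis .
  qed
qed

lemma ideal_pow_genideal_subset:
  assumes "finite A" "A \<subseteq> carrier R" "ideal I R" "\<forall>a\<in>A. \<exists>k::nat. a [^] k \<in> I"
  shows "\<exists>m. ideal_pow R (Idl A) m \<subseteq> I"
  using assms
proof (induction A rule: finite_induct)
  case empty
  have "ideal_pow R (Idl {}) 1 \<subseteq> Idl {}"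
    using ideal_pow_Suc_subset[OF genideal_ideal[OF empty_subsetI], of 0] by simp
  also have "\<dots> \<subseteq> I"
    using genideal_minimal[OF empty.prems(2)] by simp
  finally show ?case by blast
next
  case (insert a B)
  have a: "a \<in> carrier R" and B: "B \<subseteq> carrier R" using insert.prems by auto
  obtain m where m: "ideal_pow R (Idl B) m \<subseteq> I" using insert by auto
  obtain k :: nat where "a [^] k \<in> I" using insert.prems by auto
  then have "ideal_pow R (PIdl a) k \<subseteq> I"
    using ideal_pow_cgenideal_subset[OF a] cgenideal_minimal[OF insert.prems(2)] by blast
  then have "ideal_pow R (PIdl a <+> Idl B) (k + m) \<subseteq> I"
    using ideal_pow_add_subset[OF insert.prems(2) cgenideal_ideal[OF a] genideal_ideal[OF B] _ m] by blast
  moreover have "Idl (insert a B) \<subseteq> PIdl a <+> Idl B"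
  proof -
    have "insert a B \<subseteq> Idl (PIdl a \<union> Idl B)"
      using cgenideal_self[OF a] genideal_self[OF B] genideal_self[of "PIdl a \<union> Idl B"]
        ideal.Icarr[OF cgenideal_ideal[OF a]] ideal.Icarr[OF genideal_ideal[OF B]] by blast
    then show ?thesis
      using genideal_minimal[OF add_ideals[OF cgenideal_ideal[OF a] genideal_ideal[OF B]]]
        union_genideal[OF cgenideal_ideal[OF a] genideal_ideal[OF B]] by simp
  qed
  ultimately show ?case
    using ideal_pow_mono by blast
qed

lemma maximal_avoiding_extend:
  assumes I: "maximal_avoiding I x" and a: "a \<in> carrier R" "a \<notin> I"
  shows "\<exists>i\<in>I. \<exists>s\<in>carrier R. x = i \<oplus> s \<otimes> a"
proof -
  have idI: "ideal I R" using I by (simp add: maximal_avoiding_def)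
  have K: "ideal (I <+> PIdl a) R" using add_ideals[OF idI cgenideal_ideal[OF a(1)]] .
  have "I \<union> PIdl a \<subseteq> I <+> PIdl a"
    using genideal_self[of "I \<union> PIdl a"] union_genideal[OF idI cgenideal_ideal[OF a(1)]]
      ideal.Icarr[OF idI] ideal.Icarr[OF cgenideal_ideal[OF a(1)]] by blast
  then have "I \<subset> I <+> PIdl a"
    using cgenideal_self[OF a(1)] a(2) by blast
  then have "x \<in> I <+> PIdl a"
    using I K unfolding maximal_avoiding_def by blast
  then show ?thesis
    unfolding set_add_def' cgenideal_def by blast
qed

lemma maximal_avoiding_colon_primeideal:
  assumes I: "maximal_avoiding I x" and x: "x \<in> carrier R"
  shows "primeideal (ideal_colon I {x}) R"
proof -
  have idI: "ideal I R" and xI: "x \<notin> I" using I by (auto simp: maximal_avoiding_def)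
  show ?thesis
  proof (rule primeidealI[OF ideal_colon_is_ideal[OF idI] is_cring])
    have "\<one> \<notin> ideal_colon I {x}"
      using x xI by (simp add: ideal_colon_singleton_iff)
    then show "carrier R \<noteq> ideal_colon I {x}"
      by blast
  next
    fix a b assume a: "a \<in> carrier R" and b: "b \<in> carrier R" and ab: "a \<otimes> b \<in> ideal_colon I {x}"
    show "a \<in> ideal_colon I {x} \<or> b \<in> ideal_colon I {x}"
    proof (cases "a \<in> ideal_colon I {x}")
      case False
      then have "x \<otimes> a \<notin> I" using a by (simp add: ideal_colon_singleton_iff)
      then obtain i s where i: "i \<in> I" and s: "s \<in> carrier R" and xis: "x = i \<oplus> s \<otimes> (x \<otimes> a)"
        using maximal_avoiding_extend[OF I m_closed[OF x a]] by blast
      have ic: "i \<in> carrier R" using ideal.Icarr[OF idI i] .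
      have "x \<otimes> b = (i \<oplus> s \<otimes> (x \<otimes> a)) \<otimes> b"
        using arg_cong[where f = "\<lambda>y. y \<otimes> b", OF xis] .
      also have "\<dots> = i \<otimes> b \<oplus> s \<otimes> (x \<otimes> (a \<otimes> b))"
        using ic s a b x by algebra
      finally have "x \<otimes> b = i \<otimes> b \<oplus> s \<otimes> (x \<otimes> (a \<otimes> b))" .
      moreover have "i \<otimes> b \<in> I"
        using ideal.I_r_closed[OF idI i b] .
      moreover have "s \<otimes> (x \<otimes> (a \<otimes> b)) \<in> I"
        using ideal.I_l_closed[OF idI _ s] ab by (simp add: ideal_colon_singleton_iff)
      ultimately have "x \<otimes> b \<in> I"
        using idI by (metis additive_subgroup.a_closed ideal.axioms(1))
      then have "b \<in> ideal_colon I {x}"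
        using b by (simp add: ideal_colon_singleton_iff)
      then show ?thesis ..
    qed simp
  qed (use x in simp)
qed

end

locale noetherian_cring = cring + noetherian_ring

context noetherian_cring
begin

lemma maximal_avoiding_colon_pow_mem:
  assumes I: "maximal_avoiding I x" and x: "x \<in> carrier R" and p: "p \<in> ideal_colon I {x}"
  shows "\<exists>N::nat. p [^] N \<in> I"
proof -
  have idI: "ideal I R" and xI: "x \<notin> I" using I by (auto simp: maximal_avoiding_def)
  have pc: "p \<in> carrier R" and xp: "x \<otimes> p \<in> I" using p by (auto simp: ideal_colon_singleton_iff)
  define C where "C n = ideal_colon I {p [^] (n::nat)}" for n
  have memC: "s \<in> C n \<longleftrightarrow> s \<in> carrier R \<and> p [^] n \<otimes> s \<in> I" for s n
    by (simp add: C_def ideal_colon_singleton_iff)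
  have "C n \<subseteq> C (Suc n)" for n
  proof
    fix s assume "s \<in> C n"
    then have s: "s \<in> carrier R" and "p [^] n \<otimes> s \<in> I" by (simp_all add: memC)
    then have "p \<otimes> (p [^] n \<otimes> s) \<in> I" using ideal.I_l_closed[OF idI _ pc] by blast
    moreover have "p [^] Suc n \<otimes> s = p \<otimes> (p [^] n \<otimes> s)"
      using s pc by (simp only: nat_pow_Suc2 m_assoc nat_pow_closed)
    ultimately show "s \<in> C (Suc n)" using s memC by metis
  qed
  then have "mono C"
    by (rule incseq_SucI)
  moreover have "ideal (C n) R" for n
    unfolding C_def using ideal_colon_is_ideal[OF idI] pc by simp
  ultimately obtain N where N: "C (Suc N) \<subseteq> C N"
    using mono_ideal_seq_stabilizes by blast
  have "p [^] N \<in> I"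
  proof (rule ccontr)
    assume "p [^] N \<notin> I"
    then obtain i s where i: "i \<in> I" and s: "s \<in> carrier R" and xis: "x = i \<oplus> s \<otimes> p [^] N"
      using maximal_avoiding_extend[OF I nat_pow_closed[OF pc]] by blast
    have ic: "i \<in> carrier R" using ideal.Icarr[OF idI i] .
    have "q \<otimes> p \<otimes> s = (i \<oplus> s \<otimes> q) \<otimes> p \<ominus> i \<otimes> p" if "q \<in> carrier R" for q
      using that ic s pc by algebra
    then have "p [^] Suc N \<otimes> s = (i \<oplus> s \<otimes> p [^] N) \<otimes> p \<ominus> i \<otimes> p"
      using pc by simp
    also have "\<dots> \<in> I"
      using xp xis ideal.I_r_closed[OF idI i pc] idI
      by (simp add: additive_subgroup.a_closed additive_subgroup.a_inv_closed ideal.axioms(1) a_minus_def)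
    finally have "s \<in> C N"
      using N memC s by blast
    then have "x \<in> I"
      using xis i idI memC s pc
      by (simp add: additive_subgroup.a_closed ideal.axioms(1) m_comm)
    then show False
      using xI by blast
  qed
  then show ?thesis ..
qed

lemma exists_primeideal_pow_notin:
  assumes x: "x \<in> carrier R" "x \<noteq> \<zero>"
  shows "\<exists>P n. primeideal P R \<and> x \<notin> ideal_pow R P n"
proof -
  obtain I where I: "maximal_avoiding I x"
    using exists_maximal_avoiding[OF x(2)] ..
  define P where "P = ideal_colon I {x}"
  have idI: "ideal I R" and xI: "x \<notin> I" using I by (auto simp: maximal_avoiding_def)
  have "ideal P R"
    unfolding P_def using ideal_colon_is_ideal[OF idI] x(1) by simp
  then obtain A where A: "A \<subseteq> carrier R" "finite A" "P = Idl A"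
    using finetely_gen by blast
  have "\<forall>a\<in>A. \<exists>k::nat. a [^] k \<in> I"
    using maximal_avoiding_colon_pow_mem[OF I x(1)] genideal_self[OF A(1)] A(3) unfolding P_def by blast
  then obtain m where "ideal_pow R P m \<subseteq> I"
    using ideal_pow_genideal_subset[OF A(2,1) idI] A(3) by blast
  then show ?thesis
    using maximal_avoiding_colon_primeideal[OF I x(1)] xI unfolding P_def by blast
qed

end

theorem proposition4p5:
  fixes R (structure)
  assumes "cring R" and "noetherian_ring R"
  shows "nil_infty R = {\<zero>}"
proof -
  interpret noetherian_cring R
    using assms by (intro noetherian_cring.intro)
  have "\<zero> \<in> ideal_pow R P n" if "primeideal P R" for P n
    using ideal_pow_ideal[OF primeideal.axioms(1)[OF that]]
    by (simp add: additive_subgroup.zero_closed ideal.axioms(1))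
  moreover have "x \<notin> nil_infty R" if "x \<in> carrier R" "x \<noteq> \<zero>" for x
    using exists_primeideal_pow_notin[OF that] unfolding nil_infty_def by blast
  ultimately show ?thesis
    unfolding nil_infty_def by blast
qed

end
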